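(* Let $\beta=(\pi_\ell)_{\ell=1}^L$ be a chainable architecture. Then for all $1\le q\le s<t\le L$, the patterns $\pi_q*\cdots*\pi_s$ and $\pi_{s+1}*\cdots*\pi_t$ are well defined, the pair $(\pi_q*\cdots*\pi_s,\ \pi_{s+1}*\cdots*\pi_t)$ is chainable, and $$r(\pi_q*\cdots*\pi_s,\ \pi_{s+1}*\cdots*\pi_t)=r(\pi_s,\pi_{s+1}).$$
   Context: A pattern is a tuple $\pi=(a,b,c,d)$ of positive integers. Patterns $\pi=(a,b,c,d),\pi'=(a',b',c',d')$ are chainable if $ac/a'=b'd'/d$, this common value $r(\pi,\pi')$ is an integer, $a\mid a'$ and $d'\mid d$; then $\pi*\pi':=(a,bd/d',a'c'/a,d')$. An architecture $\beta=(\pi_\ell)_{\ell=1}^L$, $\pi_\ell=(a_\ell,b_\ell,c_\ell,d_\ell)$, is a sequence of patterns with $a_\ell c_\ell d_\ell=a_{\ell+1}b_{\ell+1}d_{\ell+1}$; it is chainable if every consecutive pair $(\pi_\ell,\pi_{\ell+1})$ is chainable. $\pi_q*\cdots*\pi_s$ denotes the iterated product $((\pi_q*\pi_{q+1})*\cdots)*\pi_s$ (equal to $\pi_q$ if $q=s$). *)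

theory Defs
  imports Complex_Main
begin

type_synonym pattern = "nat \<times> nat \<times> nat \<times> nat"

definition is_pattern :: "pattern \<Rightarrow> bool" where
  "is_pattern p = (case p of (a,b,c,d) \<Rightarrow> 0 < a \<and> 0 < b \<and> 0 < c \<and> 0 < d)"

definition r_val :: "pattern \<Rightarrow> pattern \<Rightarrow> rat" where
  "r_val p p' = (case p of (a,b,c,d) \<Rightarrow> case p' of (a',b',c',d') \<Rightarrow>
      of_nat a * of_nat c / of_nat a')"

definition chainable :: "pattern \<Rightarrow> pattern \<Rightarrow> bool" where
  "chainable p p' = (case p of (a,b,c,d) \<Rightarrow> case p' of (a',b',c',d') \<Rightarrow>
      (of_nat a * of_nat c / of_nat a' :: rat) = of_nat b' * of_nat d' / of_nat d
      \<and> r_val p p' \<in> \<int> \<and> a dvd a' \<and> d' dvd d)"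

text \<open>B * B' = (a, b d / d', a' c' / a, d'); the divisions are exact for chainable pairs.\<close>
definition pmul :: "pattern \<Rightarrow> pattern \<Rightarrow> pattern" where
  "pmul p p' = (case p of (a,b,c,d) \<Rightarrow> case p' of (a',b',c',d') \<Rightarrow>
      (a, b * d div d', a' * c' div a, d'))"

text \<open>iprod B q k = Some (pi_q * ... * pi_(q+k)) (left-nested), or None if some
  intermediate product is not defined (the pair is not chainable).\<close>
fun iprod :: "(nat \<Rightarrow> pattern) \<Rightarrow> nat \<Rightarrow> nat \<Rightarrow> pattern option" where
  "iprod B q 0 = Some (B q)"
| "iprod B q (Suc k) = (case iprod B q k of None \<Rightarrow> None
     | Some p \<Rightarrow> if chainable p (B (q + Suc k)) then Some (pmul p (B (q + Suc k))) else None)"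

definition architecture :: "(nat \<Rightarrow> pattern) \<Rightarrow> nat \<Rightarrow> bool" where
  "architecture B L = ((\<forall>l\<in>{1..L}. is_pattern (B l)) \<and>
     (\<forall>l. 1 \<le> l \<and> l < L \<longrightarrow>
        (case B l of (a,b,c,d) \<Rightarrow> case B (Suc l) of (a',b',c',d') \<Rightarrow> a * c * d = a' * b' * d')))"

definition chainable_arch :: "(nat \<Rightarrow> pattern) \<Rightarrow> nat \<Rightarrow> bool" where
  "chainable_arch B L = (architecture B L \<and>
     (\<forall>l. 1 \<le> l \<and> l < L \<longrightarrow> chainable (B l) (B (Suc l))))"

end

theory Submission
  imports Defs
begin

text \<open>
  The product \<open>\<pi> * \<pi>'\<close> has the same \<open>a\<close> and \<open>b d\<close> as \<open>\<pi>\<close> and the same \<open>a c\<close> and \<open>d\<close>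
  as \<open>\<pi>'\<close>, while chainability of a pair and its ratio \<open>r\<close> only depend on these
  quantities, apart from the divisibility conditions, which propagate by transitivity.
  So a chainable pair stays chainable, with the same ratio, when its left member is
  multiplied by a predecessor or its right member by a successor. Growing
  \<open>(\<pi>\<^sub>s, \<pi>\<^sub>s\<^sub>+\<^sub>1)\<close> in this way to both partial products gives the claim.
\<close>

lemma chainable_fst_dvd: "chainable p x \<Longrightarrow> fst p dvd fst x"
  by (cases p, cases x) (simp add: chainable_def)

lemma r_val_pmul_left:
  assumes "fst p dvd fst x"
  shows "r_val (pmul p x) y = r_val x y"
proof -
  obtain a b c d a' b' c' d' where p: "p = (a, b, c, d)" and x: "x = (a', b', c', d')"
    by (cases p, cases x) auto
  from assms have "a * (a' * c' div a) = a' * c'"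
    by (simp add: p x dvd_mult2)
  then have "(of_nat a * of_nat (a' * c' div a) :: rat) = of_nat a' * of_nat c'"
    by (metis of_nat_mult)
  then show ?thesis
    by (cases y) (simp add: p x pmul_def r_val_def)
qed

lemma r_val_pmul_right: "r_val x (pmul y z) = r_val x y"
  by (cases x, cases y, cases z) (simp add: pmul_def r_val_def)

lemma chainable_pmul_left:
  assumes "chainable p x" and "chainable x y"
  shows "chainable (pmul p x) y"
proof -
  obtain a b c d a' b' c' d' where p: "p = (a, b, c, d)" and x: "x = (a', b', c', d')"
    by (cases p, cases x) auto
  from assms chainable_fst_dvd[of p x] r_val_pmul_left[of p x y] show ?thesis
    by (cases y) (auto simp: p x chainable_def pmul_def r_val_def intro: dvd_trans)
qed

lemma chainable_pmul_right:
  assumes "chainable x y" and "chainable y z"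
  shows "chainable x (pmul y z)"
proof -
  obtain a b c d a' b' c' d' where y: "y = (a, b, c, d)" and z: "z = (a', b', c', d')"
    by (cases y, cases z) auto
  have "d' dvd d"
    using assms(2) by (simp add: y z chainable_def)
  then have "(b * d div d') * d' = b * d"
    by (simp add: dvd_mult)
  then have "(of_nat (b * d div d') * of_nat d' :: rat) = of_nat b * of_nat d"
    by (metis of_nat_mult)
  with assms \<open>d' dvd d\<close> r_val_pmul_right[of x y z] show ?thesis
    by (cases x) (auto simp: y z chainable_def pmul_def r_val_def intro: dvd_trans)
qed

lemma iprod_chainable_succ:
  assumes "\<forall>l\<in>{q..q + k}. chainable (B l) (B (Suc l))"
  shows "\<exists>p. iprod B q k = Some p \<and> chainable p (B (Suc (q + k)))
           \<and> r_val p (B (Suc (q + k))) = r_val (B (q + k)) (B (Suc (q + k)))"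
  using assms
proof (induction k)
  case 0
  then show ?case by simp
next
  case (Suc k)
  then obtain p where p: "iprod B q k = Some p" and chain: "chainable p (B (Suc (q + k)))"
    by auto
  have next_chain: "chainable (B (q + Suc k)) (B (Suc (q + Suc k)))"
    using Suc.prems by simp
  have "iprod B q (Suc k) = Some (pmul p (B (q + Suc k)))"
    using p chain by simp
  moreover have "chainable (pmul p (B (q + Suc k))) (B (Suc (q + Suc k)))"
    using chainable_pmul_left[OF chain] next_chain by simp
  moreover have "r_val (pmul p (B (q + Suc k))) y = r_val (B (q + Suc k)) y" for y
    using r_val_pmul_left[OF chainable_fst_dvd[OF chain]] by simp
  ultimately show ?case by blast
qed

lemma chainable_iprod:
  assumes "chainable x (B q)" and "\<forall>l\<in>{q..<q + k}. chainable (B l) (B (Suc l))"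
  shows "\<exists>p. iprod B q k = Some p \<and> chainable x p \<and> r_val x p = r_val x (B q)"
  using assms(2)
proof (induction k)
  case 0
  then show ?case using assms(1) by simp
next
  case (Suc k)
  then obtain p where p: "iprod B q k = Some p" and "chainable x p"
    and "r_val x p = r_val x (B q)"
    by auto
  moreover have "chainable p (B (Suc (q + k)))"
    using iprod_chainable_succ[of q k B] Suc.prems p by auto
  ultimately show ?case
    by (auto simp: chainable_pmul_right r_val_pmul_right)
qed

theorem lemma4p10:
  fixes B :: "nat \<Rightarrow> pattern" and L q s t :: nat
  assumes "chainable_arch B L"
    and "1 \<le> q" and "q \<le> s" and "s < t" and "t \<le> L"
  shows "\<exists>P Q. iprod B q (s - q) = Some P \<and> iprod B (Suc s) (t - Suc s) = Some Q
           \<and> chainable P Q \<and> r_val P Q = r_val (B s) (B (Suc s))"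
proof -
  have chain: "chainable (B l) (B (Suc l))" if "q \<le> l" "l < t" for l
    using assms that unfolding chainable_arch_def by auto
  obtain P where "iprod B q (s - q) = Some P" and "chainable P (B (Suc s))"
    and "r_val P (B (Suc s)) = r_val (B s) (B (Suc s))"
    using iprod_chainable_succ[of q "s - q" B] chain assms by auto
  moreover obtain Q where "iprod B (Suc s) (t - Suc s) = Some Q" and "chainable P Q"
    and "r_val P Q = r_val P (B (Suc s))"
    using chainable_iprod[of P B "Suc s" "t - Suc s"] chain assms \<open>chainable P (B (Suc s))\<close>
    by auto
  ultimately show ?thesis by auto
qed

end
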